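(* Let $0=g_0<g_1<\dots<g_{n-1}$ be any increasing family of delays and $\theta\in(1/2,2\alpha)$. Then (for a suitable version of the Brownian motion) almost surely the path $\mathcal W(g)$ is $\theta$-Hölder rough at scale $T/2$ on $[0,T]$.
   Context: Fix $T>0$ and $\alpha\in(1/3,1/2)$. $W=(W^1,\dots,W^m)$ is a two-sided $m$-dimensional Brownian motion ($W_0=0$, $(W_t)_{t\ge0}$ and $(W_{-t})_{t\ge0}$ independent). $\mathcal W_t(g):=(W^k_{t-g_i})_{k=1,\dots,m;\,i=0,\dots,n-1}\in V:=\mathbb R^{m\times n}$, with increments $\mathcal W_{s,t}=\mathcal W_t-\mathcal W_s$. A path $Y:[0,T]\to V$ is called $\theta$-Hölder rough at scale $\varepsilon_0>0$ on $[0,T]$ if there exists $L>0$ such that for every $\varphi\in V^*$, every $s\in[0,T]$ and every $\varepsilon\in(0,\varepsilon_0)$ there exists $t\in[0,T]$ with $|t-s|\le\varepsilon$ and $|\varphi Y_{s,t}|\ge L\varepsilon^\theta|\varphi|$; the largest such $L$ is the modulus of $\theta$-Hölder roughness. *)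

theory Defs
  imports "HOL-Probability.Probability"
begin

text \<open>Components are indexed by k < m; W k t is the k-th coordinate at time t, t real.  This is equivalent to
  (W_t)_{t>=0} and (W_{-t})_{t>=0} being independent standard Brownian motions.\<close>
definition two_sided_bm :: "'a measure \<Rightarrow> nat \<Rightarrow> (nat \<Rightarrow> real \<Rightarrow> 'a \<Rightarrow> real) \<Rightarrow> bool" where
  "two_sided_bm M m W \<longleftrightarrow>
     prob_space M \<and>
     (\<forall>k<m. \<forall>\<omega>\<in>space M. W k 0 \<omega> = 0) \<and>
     (\<forall>k<m. \<forall>\<omega>\<in>space M. continuous_on UNIV (\<lambda>t. W k t \<omega>)) \<and>
     (\<forall>(N::nat) (ts::nat \<Rightarrow> real). (\<forall>i<N. ts i < ts (Suc i)) \<longrightarrow>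
        prob_space.indep_vars M (\<lambda>_. borel)
          (\<lambda>(k, i) \<omega>. W k (ts (Suc i)) \<omega> - W k (ts i) \<omega>) ({..<m} \<times> {..<N}) \<and>
        (\<forall>k<m. \<forall>i<N. distributed M lborel (\<lambda>\<omega>. W k (ts (Suc i)) \<omega> - W k (ts i) \<omega>)
                          (normal_density 0 (sqrt (ts (Suc i) - ts i)))))"

text \<open>A linear functional phi on R^I is given by its
  coefficients phi i; its norm is the Euclidean (dual) norm.\<close>
definition holder_rough :: "'i set \<Rightarrow> real \<Rightarrow> real \<Rightarrow> real \<Rightarrow> (real \<Rightarrow> 'i \<Rightarrow> real) \<Rightarrow> bool" where
  "holder_rough I \<theta> \<epsilon>0 T Y \<longleftrightarrow>
     (\<exists>L>0. \<forall>\<phi>::'i \<Rightarrow> real. \<forall>s\<in>{0..T}. \<forall>\<epsilon>. 0 < \<epsilon> \<and> \<epsilon> < \<epsilon>0 \<longrightarrow>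
        (\<exists>t\<in>{0..T}. \<bar>t - s\<bar> \<le> \<epsilon> \<and>
           \<bar>\<Sum>i\<in>I. \<phi> i * (Y t i - Y s i)\<bar> \<ge> L * \<epsilon> powr \<theta> * sqrt (\<Sum>i\<in>I. (\<phi> i)\<^sup>2)))"

end

theory Submission
  imports Defs
begin

text \<open>
  Split each block \<open>[r T/2^j, (r+1) T/2^j]\<close> of the dyadic partition of \<open>[0,T]\<close> into \<open>N\<close> equal steps
  of length \<open>h = T/(2^j N)\<close>. Once \<open>T/2^j\<close> is smaller than the gaps between the delays, the time
  intervals seen by different delays are disjoint, so for a direction \<open>\<phi>\<close> with sup norm at least
  \<open>1/2\<close> the \<open>N\<close> increments of \<open>\<phi> \<W>(g)\<close> over these steps are independent centred Gaussians of
  standard deviation at least \<open>\<surd>h / 2\<close>. All of them are smaller than \<open>4 (T/2^j)\<^sup>\<theta>\<close> with probability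
  at most \<open>(8 (T/2^j)\<^sup>\<theta> / \<surd>h)^N \<approx> 2^(-j N (\<theta> - 1/2))\<close>. A union bound over the \<open>2^j\<close> blocks and an
  \<open>8^(-j)\<close>-net of directions, together with Chebyshev's bound on single increments, gives
  probabilities summable in \<open>j\<close> as soon as \<open>N (\<theta> - 1/2) \<ge> 3 d + 3\<close>, \<open>d = m n\<close>. By Borel-Cantelli,
  almost surely at all fine scales every block contains a step along which every direction sees an
  increment of size \<open>\<ge> 2 (T/2^j)\<^sup>\<theta>\<close>; given \<open>s\<close> and \<open>\<epsilon>\<close>, choose \<open>2^(-j) \<approx> \<epsilon>\<close> and a block inside
  \<open>[s - \<epsilon>, s + \<epsilon>]\<close>, and one endpoint \<open>t\<close> of that step satisfies \<open>|\<phi> \<W>\<^sub>s\<^sub>,\<^sub>t| \<ge> (T/2^j)\<^sup>\<theta> \<approx> \<epsilon>\<^sup>\<theta>\<close>.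
\<close>

section \<open>Gaussian estimates for independent families\<close>

lemma (in prob_space) indep_sets_reindex:
  assumes ind: "indep_sets F J" and inj: "inj_on e I" and sub: "e ` I \<subseteq> J"
  shows "indep_sets (\<lambda>i. F (e i)) I"
proof (rule indep_setsI)
  fix i assume "i \<in> I" then show "F (e i) \<subseteq> events"
    using ind sub unfolding indep_sets_def by auto
next
  fix A K assume K: "K \<noteq> {}" "K \<subseteq> I" "finite K" and A: "\<forall>j\<in>K. A j \<in> F (e j)"
  define B where "B x = A (the_inv_into K e x)" for x
  have injK: "inj_on e K" using inj K by (auto intro: inj_on_subset)
  have B: "B (e j) = A j" if "j \<in> K" for j
    using the_inv_into_f_f[OF injK that] by (simp add: B_def)
  have "prob (\<Inter>x\<in>e ` K. B x) = (\<Prod>x\<in>e ` K. prob (B x))"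
    by (rule indep_setsD[OF ind]) (use K sub A B in auto)
  then show "prob (\<Inter>j\<in>K. A j) = (\<Prod>j\<in>K. prob (A j))"
    using B by (simp add: prod.reindex[OF injK])
qed

lemma (in prob_space) indep_vars_reindex:
  assumes ind: "indep_vars M' X J" and inj: "inj_on e I" and sub: "e ` I \<subseteq> J"
  shows "indep_vars (\<lambda>i. M' (e i)) (\<lambda>i. X (e i)) I"
  using ind sub unfolding indep_vars_def
  by (auto intro!: indep_sets_reindex[OF _ inj sub, where F="\<lambda>i. sigma_sets (space M) {X i -` A \<inter> space M |A. A \<in> sets (M' i)}"])

lemma normal_density_le_peak:
  assumes "0 < \<sigma>"
  shows "normal_density \<mu> \<sigma> y \<le> 1 / (\<sigma> * sqrt (2 * pi))"
proof -
  have "exp (- (y - \<mu>)\<^sup>2 / (2 * \<sigma>\<^sup>2)) \<le> 1"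
    by simp
  moreover have "sqrt (2 * pi * \<sigma>\<^sup>2) = \<sigma> * sqrt (2 * pi)"
    using assms by (simp add: real_sqrt_mult mult.commute)
  ultimately show ?thesis
    using assms unfolding normal_density_def by (simp add: divide_right_mono)
qed

lemma (in prob_space) normal_prob_abs_less_le:
  assumes S: "distributed M lborel S (normal_density \<mu> \<sigma>)" and \<sigma>: "0 < \<sigma>" and x: "0 < x"
  shows "prob {\<omega>\<in>space M. \<bar>S \<omega>\<bar> < x} \<le> x / \<sigma>"
proof -
  have "emeasure M (S -` {-x<..<x} \<inter> space M)
      = (\<integral>\<^sup>+y. ennreal (normal_density \<mu> \<sigma> y) * indicator {-x<..<x} y \<partial>lborel)"
    by (rule distributed_emeasure[OF S]) simp
  also have "\<dots> \<le> (\<integral>\<^sup>+y. ennreal (1 / (\<sigma> * sqrt (2 * pi))) * indicator {-x<..<x} y \<partial>lborel)"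
    using \<sigma> by (intro nn_integral_mono)
      (auto simp: indicator_def intro!: ennreal_leI normal_density_le_peak)
  also have "\<dots> = ennreal (1 / (\<sigma> * sqrt (2 * pi))) * ennreal (2 * x)"
    using x by (subst nn_integral_cmult_indicator) auto
  also have "\<dots> = ennreal (2 * x / (\<sigma> * sqrt (2 * pi)))"
    using \<sigma> x by (simp add: ennreal_mult'[symmetric])
  finally have "prob (S -` {-x<..<x} \<inter> space M) \<le> 2 * x / (\<sigma> * sqrt (2 * pi))"
    using \<sigma> x by (simp add: emeasure_eq_measure ennreal_le_iff)
  also have "\<dots> \<le> 2 * x / (\<sigma> * 2)"
    using \<sigma> x pi_gt3 by (intro divide_left_mono mult_left_mono) (auto simp: real_le_rsqrt)
  moreover have "{\<omega>\<in>space M. \<bar>S \<omega>\<bar> < x} = S -` {-x<..<x} \<inter> space M"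
    by auto
  ultimately show ?thesis
    by simp
qed

lemma (in prob_space) normal_prob_abs_ge_le:
  assumes X: "distributed M lborel X (normal_density 0 \<sigma>)" and "0 < \<sigma>" and "0 < R"
  shows "prob {\<omega>\<in>space M. R \<le> \<bar>X \<omega>\<bar>} \<le> \<sigma>\<^sup>2 / R\<^sup>2"
proof -
  have "X \<in> borel_measurable M"
    using distributed_measurable[OF X] by (simp add: measurable_lborel1 cong: measurable_cong_sets)
  moreover have "integrable M (\<lambda>\<omega>. X \<omega> ^ 2)"
    using distributed_integrable[OF X, of "\<lambda>x. x^2"] integrable_normal_moment[of \<sigma> 0 2] assms
    by simp
  ultimately have "prob {\<omega>\<in>space M. R \<le> \<bar>X \<omega> - expectation X\<bar>} \<le> variance X / R\<^sup>2"
    using assms by (intro Chebyshev_inequality)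
  then show ?thesis
    using normal_distributed_expectation[OF _ X] normal_distributed_variance[OF _ X] assms by simp
qed

lemma (in prob_space) indep_normal_combination:
  fixes X :: "'i \<Rightarrow> 'a \<Rightarrow> real"
  assumes C: "finite C" and ind: "indep_vars (\<lambda>_. borel) X C"
    and X: "\<And>c. c \<in> C \<Longrightarrow> distributed M lborel (X c) (normal_density 0 s)"
    and s: "0 < s" and c0: "c0 \<in> C" "\<phi> c0 \<noteq> 0"
  shows "\<exists>\<sigma>\<ge>\<bar>\<phi> c0\<bar> * s. distributed M lborel (\<lambda>\<omega>. \<Sum>c\<in>C. \<phi> c * X c \<omega>) (normal_density 0 \<sigma>)"
proof -
  define C' where "C' = {c\<in>C. \<phi> c \<noteq> 0}"
  define \<sigma> where "\<sigma> = sqrt (\<Sum>c\<in>C'. (\<bar>\<phi> c\<bar> * s)\<^sup>2)"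
  have "finite C'" "C' \<subseteq> C" "c0 \<in> C'"
    using C c0 by (auto simp: C'_def)
  have "(\<bar>\<phi> c0\<bar> * s)\<^sup>2 \<le> (\<Sum>c\<in>C'. (\<bar>\<phi> c\<bar> * s)\<^sup>2)"
    using \<open>finite C'\<close> \<open>c0 \<in> C'\<close> by (intro member_le_sum) auto
  then have "sqrt ((\<bar>\<phi> c0\<bar> * s)\<^sup>2) \<le> \<sigma>"
    unfolding \<sigma>_def by (rule real_sqrt_le_mono)
  then have "\<bar>\<phi> c0\<bar> * s \<le> \<sigma>"
    using s by simp
  moreover have "distributed M lborel (\<lambda>\<omega>. \<Sum>c\<in>C'. 0 + \<phi> c * X c \<omega>)
      (normal_density (\<Sum>c\<in>C'. 0 + \<phi> c * 0) \<sigma>)"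
    unfolding \<sigma>_def
  proof (rule sum_indep_normal[OF \<open>finite C'\<close>])
    show "C' \<noteq> {}"
      using \<open>c0 \<in> C'\<close> by auto
    show "indep_vars (\<lambda>_. borel) (\<lambda>c \<omega>. 0 + \<phi> c * X c \<omega>) C'"
      using indep_vars_subset[OF ind \<open>C' \<subseteq> C\<close>]
      by (rule indep_vars_compose2[where Y="\<lambda>c y. 0 + \<phi> c * y"]) auto
    fix c assume "c \<in> C'"
    then show "0 < \<bar>\<phi> c\<bar> * s"
      using s by (simp add: C'_def)
    show "distributed M lborel (\<lambda>\<omega>. 0 + \<phi> c * X c \<omega>) (normal_density (0 + \<phi> c * 0) (\<bar>\<phi> c\<bar> * s))"
      using \<open>c \<in> C'\<close> \<open>C' \<subseteq> C\<close> s by (intro normal_density_affine[OF X]) (auto simp: C'_def)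
  qed
  moreover have "(\<Sum>c\<in>C'. \<phi> c * X c \<omega>) = (\<Sum>c\<in>C. \<phi> c * X c \<omega>)" for \<omega>
    using C by (intro sum.mono_neutral_left) (auto simp: C'_def)
  ultimately show ?thesis
    by auto
qed

lemma (in prob_space) prob_indep_normal_combination_small:
  fixes X :: "'i \<Rightarrow> 'a \<Rightarrow> real"
  assumes C: "finite C" and ind: "indep_vars (\<lambda>_. borel) X C"
    and X: "\<And>c. c \<in> C \<Longrightarrow> distributed M lborel (X c) (normal_density 0 s)"
    and s: "0 < s" and x: "0 < x" and c0: "c0 \<in> C" "1/2 \<le> \<bar>\<phi> c0\<bar>"
  shows "prob {\<omega>\<in>space M. \<bar>\<Sum>c\<in>C. \<phi> c * X c \<omega>\<bar> < x} \<le> 2 * x / s"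
proof -
  have "\<phi> c0 \<noteq> 0"
    using c0(2) by auto
  then obtain \<sigma> where "\<bar>\<phi> c0\<bar> * s \<le> \<sigma>"
    and S: "distributed M lborel (\<lambda>\<omega>. \<Sum>c\<in>C. \<phi> c * X c \<omega>) (normal_density 0 \<sigma>)"
    using indep_normal_combination[OF C ind X s c0(1)] by blast
  moreover have "s / 2 \<le> \<bar>\<phi> c0\<bar> * s"
    using c0(2) s by simp
  ultimately have "s / 2 \<le> \<sigma>"
    by linarith
  moreover have "0 < s / 2"
    using s by simp
  ultimately have "0 < \<sigma>" and "x / \<sigma> \<le> x / (s / 2)"
    using x by (linarith, intro divide_left_mono) auto
  then show ?thesis
    using normal_prob_abs_less_le[OF S _ x] by (fastforce simp: mult.commute)
qed

lemma (in prob_space) small_ball_indep_normal: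
  fixes X :: "'i \<times> nat \<Rightarrow> 'a \<Rightarrow> real"
  assumes C: "finite C" and ind: "indep_vars (\<lambda>_. borel) X (C \<times> {..<N})"
    and X: "\<And>c l. c \<in> C \<Longrightarrow> l < N \<Longrightarrow> distributed M lborel (X (c, l)) (normal_density 0 s)"
    and s: "0 < s" and x: "0 < x" and c0: "c0 \<in> C" "1/2 \<le> \<bar>\<phi> c0\<bar>"
  shows "prob {\<omega>\<in>space M. \<forall>l<N. \<bar>\<Sum>c\<in>C. \<phi> c * X (c, l) \<omega>\<bar> < x} \<le> (2 * x / s) ^ N"
proof -
  define S where "S l \<omega> = (\<Sum>c\<in>C. \<phi> c * X (c, l) \<omega>)" for l \<omega>
  have prob_S: "prob (S l -` {-x<..<x} \<inter> space M) \<le> 2 * x / s" if "l < N" for l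
  proof -
    have "indep_vars (\<lambda>_. borel) (\<lambda>c. X (c, l)) C"
      using indep_vars_reindex[OF ind, of "\<lambda>c. (c, l)" C] \<open>l < N\<close> by (auto simp: inj_on_def)
    moreover have "S l -` {-x<..<x} \<inter> space M = {\<omega>\<in>space M. \<bar>S l \<omega>\<bar> < x}"
      by auto
    ultimately show ?thesis
      using prob_indep_normal_combination_small[where X = "\<lambda>c. X (c, l)" and \<phi> = \<phi>,
          OF C _ X[OF _ \<open>l < N\<close>] s x c0]
      unfolding S_def by simp
  qed
  have "indep_vars (\<lambda>l. PiM (C \<times> {l}) (\<lambda>_. borel)) (\<lambda>l \<omega>. restrict (\<lambda>i. X i \<omega>) (C \<times> {l})) {..<N}"
    by (rule indep_vars_restrict[OF ind]) (auto simp: disjoint_family_on_def)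
  then have "indep_vars (\<lambda>_. borel)
      (\<lambda>l \<omega>. (\<lambda>v. \<Sum>c\<in>C. \<phi> c * v (c, l)) (restrict (\<lambda>i. X i \<omega>) (C \<times> {l}))) {..<N}"
    by (rule indep_vars_compose2) measurable
  then have indep_S: "indep_vars (\<lambda>_. borel) S {..<N}"
    unfolding S_def by simp
  show ?thesis
  proof (cases "N = 0")
    case False
    have "{\<omega>\<in>space M. \<forall>l<N. \<bar>S l \<omega>\<bar> < x} = (\<Inter>l\<in>{..<N}. S l -` {-x<..<x} \<inter> space M)"
      using False by (auto simp: abs_less_iff)
    also have "prob \<dots> = (\<Prod>l<N. prob (S l -` {-x<..<x} \<inter> space M))"
      by (rule indep_varsD_finite[OF indep_S]) (use False in auto)
    also have "\<dots> \<le> (\<Prod>l<N. 2 * x / s)"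
      using prob_S by (intro prod_mono) auto
    finally show ?thesis
      by (simp add: S_def)
  qed simp
qed

lemma (in prob_space) AE_eventually_of_geometric_bound:
  assumes sets: "\<And>j. {\<omega>\<in>space M. \<not> P j \<omega>} \<in> events"
    and bound: "\<And>j. j0 \<le> j \<Longrightarrow> prob {\<omega>\<in>space M. \<not> P j \<omega>} \<le> C * (1/2)^j"
  shows "AE \<omega> in M. \<exists>J. \<forall>j\<ge>J. P j \<omega>"
proof -
  define A where "A k = {\<omega>\<in>space M. \<not> P (k + j0) \<omega>}" for k
  have "summable (\<lambda>k. C * (1/2)^(k + j0))"
    by (intro summable_mult) (simp add: power_add summable_mult2)
  then have "summable (\<lambda>k. prob (A k))"
    by (rule summable_comparison_test'[where N=0]) (simp add: A_def bound)
  then have "AE \<omega> in M. eventually (\<lambda>k. \<omega> \<in> space M - A k) sequentially"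
    using sets by (intro borel_cantelli_AE1) (auto simp: A_def emeasure_eq_measure)
  then show ?thesis
  proof (rule eventually_mono)
    fix \<omega> assume "eventually (\<lambda>k. \<omega> \<in> space M - A k) sequentially"
    then obtain K where K: "\<And>k. K \<le> k \<Longrightarrow> P (k + j0) \<omega>"
      by (auto simp: A_def eventually_sequentially)
    have "P j \<omega>" if "K + j0 \<le> j" for j
      using that K[of "j - j0"] by simp
    then show "\<exists>J. \<forall>j\<ge>J. P j \<omega>"
      by (intro exI[of _ "K + j0"]) auto
  qed
qed

section \<open>Increments of the delayed Brownian path\<close>

definition delayed_increment ::
    "(nat \<Rightarrow> real \<Rightarrow> 'a \<Rightarrow> real) \<Rightarrow> (nat \<Rightarrow> real) \<Rightarrow> real \<Rightarrow> real \<Rightarrow> nat \<times> nat \<Rightarrow> 'a \<Rightarrow> real" where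
  "delayed_increment W g s t c \<omega> = W (fst c) (t - g (snd c)) \<omega> - W (fst c) (s - g (snd c)) \<omega>"

lemma two_sided_bm_prob_space: "two_sided_bm M m W \<Longrightarrow> prob_space M"
  by (simp add: two_sided_bm_def)

lemma two_sided_bm_increment_normal:
  assumes bm: "two_sided_bm M m W" and "k < m" and "s < t"
  shows "distributed M lborel (\<lambda>\<omega>. W k t \<omega> - W k s \<omega>) (normal_density 0 (sqrt (t - s)))"
proof -
  define ts where "ts i = (if i = 0 then s else t)" for i :: nat
  have "\<forall>i<1. ts i < ts (Suc i)"
    using \<open>s < t\<close> by (simp add: ts_def)
  then have "\<forall>k<m. \<forall>i<1. distributed M lborel (\<lambda>\<omega>. W k (ts (Suc i)) \<omega> - W k (ts i) \<omega>)
      (normal_density 0 (sqrt (ts (Suc i) - ts i)))"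
    using bm unfolding two_sided_bm_def by blast
  then show ?thesis
    using \<open>k < m\<close> by (auto simp: ts_def)
qed

lemma two_sided_bm_increment_measurable:
  assumes "two_sided_bm M m W" and "k < m" and "s < t"
  shows "(\<lambda>\<omega>. W k t \<omega> - W k s \<omega>) \<in> borel_measurable M"
  using distributed_measurable[OF two_sided_bm_increment_normal[OF assms]]
  by (simp add: measurable_lborel1 cong: measurable_cong_sets)

lemma two_sided_bm_delayed_increment_measurable:
  assumes "two_sided_bm M m W" and "c \<in> {..<m} \<times> {..<n}" and "s < t"
  shows "delayed_increment W g s t c \<in> borel_measurable M"
  using two_sided_bm_increment_measurable[OF assms(1), of "fst c" "s - g (snd c)" "t - g (snd c)"] assms(2,3)
  by (auto simp: delayed_increment_def[abs_def])

lemma two_sided_bm_prob_increment_ge: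
  assumes bm: "two_sided_bm M m W" and "k < m" and "s < t" and "0 < R"
  shows "measure M {\<omega>\<in>space M. R \<le> \<bar>W k t \<omega> - W k s \<omega>\<bar>} \<le> (t - s) / R\<^sup>2"
proof -
  interpret prob_space M
    using bm by (rule two_sided_bm_prob_space)
  show ?thesis
    using normal_prob_abs_ge_le[OF two_sided_bm_increment_normal[OF assms(1-3)] _ \<open>0 < R\<close>] \<open>s < t\<close>
    by simp
qed

lemma div_mod_add_less:
  fixes b k x :: nat
  assumes "x < k"
  shows "(b * k + x) div k = b" and "(b * k + x) mod k = x"
  using assms by simp_all

lemma delayed_grid_strict_mono:
  fixes a h :: real and g :: "nat \<Rightarrow> real"
  assumes h: "0 < h" and gap: "\<forall>i. Suc i < n \<longrightarrow> g i + real N * h < g (Suc i)"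
    and q: "q < n * (N + 1) - 1"
  defines "ts \<equiv> \<lambda>q. a - g (n - 1 - q div (N + 1)) + real (q mod (N + 1)) * h"
  shows "ts q < ts (Suc q)"
proof -
  define b where "b = q div (N + 1)"
  define c where "c = q mod (N + 1)"
  have q_eq: "q = b * (N + 1) + c"
    unfolding b_def c_def by (rule div_mult_mod_eq[symmetric])
  have "c \<le> N"
    by (simp add: c_def less_Suc_eq_le)
  show ?thesis
  proof (cases "c = N")
    case False
    then have "Suc q div (N + 1) = b" and "Suc q mod (N + 1) = Suc c"
      using div_mod_add_less[of "Suc c" "N + 1" b] \<open>c \<le> N\<close> by (simp_all add: q_eq)
    then show ?thesis
      using h by (simp add: ts_def b_def c_def)
  next
    case True
    then have Suc_q: "Suc q = Suc b * (N + 1)"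
      using q_eq by simp
    then have "Suc q div (N + 1) = Suc b" and "Suc q mod (N + 1) = 0"
      using div_mod_add_less[of 0 "N + 1" "Suc b"] by simp_all
    have "Suc b * (N + 1) < n * (N + 1)"
      using q Suc_q by linarith
    then have "Suc b < n"
      by (rule mult_less_cancel2[THEN iffD1, THEN conjunct2])
    then have "n - 1 - b = Suc (n - 1 - Suc b)" and "Suc (n - 1 - Suc b) < n"
      by simp_all
    then have "g (n - 1 - Suc b) + real N * h < g (n - 1 - b)"
      using gap by simp
    then show ?thesis
      using True \<open>Suc q div (N + 1) = Suc b\<close> \<open>Suc q mod (N + 1) = 0\<close>
      by (simp add: ts_def b_def c_def)
  qed
qed

lemma inj_on_block_index:
  fixes n N :: nat
  shows "inj_on (\<lambda>(i, l). (n - 1 - i) * (N + 1) + l) ({..<n} \<times> {..<N})"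
proof (rule inj_onI, clarify)
  fix i l i' l' assume "i < n" "l < N" "i' < n" "l' < N"
    and eq: "(n - 1 - i) * (N + 1) + l = (n - 1 - i') * (N + 1) + l'"
  then have "n - 1 - i = n - 1 - i'" and "l = l'"
    using div_mod_add_less[of l "N + 1" "n - 1 - i"] div_mod_add_less[of l' "N + 1" "n - 1 - i'"]
    by auto
  then show "i = i' \<and> l = l'"
    using \<open>i < n\<close> \<open>i' < n\<close> by simp
qed

lemma block_index_less:
  fixes i l n N :: nat
  assumes "i < n" and "l < N"
  shows "(n - 1 - i) * (N + 1) + l < n * (N + 1) - 1"
proof -
  have "(n - 1 - i) * (N + 1) + l < (n - 1) * (N + 1) + N"
    using assms by (intro add_le_less_mono mult_le_mono1) auto
  also have "\<dots> = n * (N + 1) - 1"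
    using assms by (cases n) auto
  finally show ?thesis .
qed

lemma two_sided_bm_delayed_grid_indep:
  fixes a h :: real and g :: "nat \<Rightarrow> real"
  assumes bm: "two_sided_bm M m W" and h: "0 < h" and n: "0 < n"
    and gap: "\<forall>i. Suc i < n \<longrightarrow> g i + real N * h < g (Suc i)"
  shows "prob_space.indep_vars M (\<lambda>_. borel)
    (\<lambda>(c, l). delayed_increment W g (a + real l * h) (a + real (Suc l) * h) c)
    (({..<m} \<times> {..<n}) \<times> {..<N})"
proof -
  interpret prob_space M
    using bm by (rule two_sided_bm_prob_space)
  define ts where "ts q = a - g (n - 1 - q div (N + 1)) + real (q mod (N + 1)) * h" for q
  define Q where "Q = n * (N + 1) - 1"
  have "\<forall>q<Q. ts q < ts (Suc q)"
    using delayed_grid_strict_mono[OF h gap] by (simp add: ts_def Q_def)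
  then have ind: "indep_vars (\<lambda>_. borel) (\<lambda>(k, q) \<omega>. W k (ts (Suc q)) \<omega> - W k (ts q) \<omega>) ({..<m} \<times> {..<Q})"
    using bm unfolding two_sided_bm_def by blast
  \<comment> \<open>\<open>ts\<close> merges the grids \<open>a + l h - g i\<close> (\<open>l \<le> N\<close>) of all delays, delay \<open>i\<close> forming block \<open>n - 1 - i\<close>.\<close>
  define e :: "(nat \<times> nat) \<times> nat \<Rightarrow> nat \<times> nat"
    where "e = (\<lambda>((k, i), l). (k, (n - 1 - i) * (N + 1) + l))"
  have ts_e: "ts ((n - 1 - i) * (N + 1) + l) = a + real l * h - g i" if "i < n" "l < N + 1" for i l
    using that(1) by (simp only: ts_def div_mod_add_less[OF that(2)]) simp
  have inj: "inj_on e (({..<m} \<times> {..<n}) \<times> {..<N})"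
    using inj_on_block_index[of n N] unfolding e_def inj_on_def by fastforce
  have sub: "e ` (({..<m} \<times> {..<n}) \<times> {..<N}) \<subseteq> {..<m} \<times> {..<Q}"
    using block_index_less[of _ n _ N] by (auto simp: e_def Q_def)
  have reindexed: "indep_vars (\<lambda>_. borel)
      (\<lambda>x. (\<lambda>(k, q) \<omega>. W k (ts (Suc q)) \<omega> - W k (ts q) \<omega>) (e x)) (({..<m} \<times> {..<n}) \<times> {..<N})"
    by (rule indep_vars_reindex[OF ind inj sub])
  show ?thesis
  proof (rule iffD1[OF indep_vars_cong reindexed])
    fix x assume "x \<in> ({..<m} \<times> {..<n}) \<times> {..<N}"
    moreover obtain k i l where "x = ((k, i), l)"
      by (metis prod.exhaust)
    ultimately show "(\<lambda>(k, q) \<omega>. W k (ts (Suc q)) \<omega> - W k (ts q) \<omega>) (e x)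
        = (\<lambda>(c, l). delayed_increment W g (a + real l * h) (a + real (Suc l) * h) c) x"
      using ts_e[of i l] ts_e[of i "Suc l"] by (auto simp: e_def delayed_increment_def)
  qed auto
qed

lemma two_sided_bm_small_ball:
  fixes \<phi> :: "nat \<times> nat \<Rightarrow> real" and a h x :: real
  assumes bm: "two_sided_bm M m W" and h: "0 < h" and n: "0 < n"
    and gap: "\<forall>i. Suc i < n \<longrightarrow> g i + real N * h < g (Suc i)"
    and x: "0 < x" and c0: "c0 \<in> {..<m} \<times> {..<n}" "1/2 \<le> \<bar>\<phi> c0\<bar>"
  shows "measure M {\<omega>\<in>space M. \<forall>l<N. \<bar>\<Sum>c\<in>{..<m} \<times> {..<n}.
            \<phi> c * delayed_increment W g (a + real l * h) (a + real (Suc l) * h) c \<omega>\<bar> < x}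
         \<le> (2 * x / sqrt h) ^ N"
proof -
  interpret prob_space M
    using bm by (rule two_sided_bm_prob_space)
  have "distributed M lborel (delayed_increment W g (a + real l * h) (a + real (Suc l) * h) c)
      (normal_density 0 (sqrt h))" if "c \<in> {..<m} \<times> {..<n}" for c l
    using two_sided_bm_increment_normal[OF bm, of "fst c" "a + real l * h - g (snd c)" "a + real (Suc l) * h - g (snd c)"]
      that h by (auto simp: delayed_increment_def[abs_def] algebra_simps)
  then show ?thesis
    using small_ball_indep_normal[where X="\<lambda>(c, l). delayed_increment W g (a + real l * h) (a + real (Suc l) * h) c"
        and \<phi> = \<phi>, OF _ two_sided_bm_delayed_grid_indep[OF bm h n gap] _ _ x c0] h
    by simp
qed

section \<open>Roughness from estimates on dyadic grids\<close>

lemma exists_dyadic_block: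
  fixes T s \<epsilon> :: real and j :: nat
  assumes T: "0 < T" and scale: "T / 2^j \<le> \<epsilon> / 2" and s: "0 \<le> s" "s \<le> T"
  shows "\<exists>r<2^j. s - \<epsilon> \<le> real r * (T / 2^j) \<and> real r * (T / 2^j) + T / 2^j \<le> min (s + \<epsilon>) T"
proof -
  define \<delta> where "\<delta> = T / 2^j"
  have \<delta>: "0 < \<delta>" "T = 2^j * \<delta>"
    using T by (simp_all add: \<delta>_def)
  show ?thesis
  proof (cases "\<lceil>s / \<delta>\<rceil> < 2^j")
    case True
    define r where "r = nat \<lceil>s / \<delta>\<rceil>"
    have r: "real r = of_int \<lceil>s / \<delta>\<rceil>"
      using s \<delta> by (simp add: r_def)
    have "r < 2^j"
      using True by (simp add: r_def nat_less_iff)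
    have "s / \<delta> \<le> real r" "real r < s / \<delta> + 1"
      unfolding r by linarith+
    then have "s \<le> real r * \<delta>" "real r * \<delta> < (s / \<delta> + 1) * \<delta>"
      using \<delta> by (simp_all add: divide_le_eq)
    then have "s \<le> real r * \<delta>" "real r * \<delta> < s + \<delta>"
      using \<delta> by (simp_all add: distrib_right)
    moreover have "real (Suc r) \<le> 2^j"
      using \<open>r < 2^j\<close> by (metis Suc_leI of_nat_le_iff of_nat_numeral of_nat_power)
    then have "real r * \<delta> + \<delta> \<le> T"
      using \<delta> mult_right_mono[of "real (Suc r)" "2^j" \<delta>] by (simp add: distrib_right)
    ultimately show ?thesis
      using scale \<open>r < 2^j\<close> \<delta> unfolding \<delta>_def[symmetric] by (intro exI[of _ r]) auto
  next
    case False
    then have "\<not> \<lceil>s / \<delta>\<rceil> \<le> 2^j - 1"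
      by linarith
    then have "\<not> s / \<delta> \<le> of_int (2^j - 1)"
      unfolding ceiling_le_iff .
    then have "real (2^j) - 1 < s / \<delta>"
      by simp
    then have "T - \<delta> < s"
      using \<delta> by (simp add: less_divide_eq algebra_simps)
    moreover have "real (2^j - 1) * \<delta> + \<delta> = T"
      using \<delta> by (simp add: of_nat_diff algebra_simps)
    ultimately show ?thesis
      using scale s \<delta> unfolding \<delta>_def[symmetric] by (intro exI[of _ "2^j - 1"]) auto
  qed
qed

lemma exists_dyadic_scale:
  fixes T \<epsilon> :: real and J :: nat
  assumes "2 \<le> J" and "0 < \<epsilon>" and "\<epsilon> \<le> T"
  shows "\<exists>j\<ge>J. \<epsilon> / 2^J \<le> T / 2^j \<and> T / 2^j \<le> \<epsilon> / 2"
proof -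
  define P where "P j \<longleftrightarrow> J \<le> j \<and> T / 2^j \<le> \<epsilon> / 2" for j
  obtain k :: nat where "T / (\<epsilon> / 2) < 2^k"
    using real_arch_pow[of 2 "T / (\<epsilon> / 2)"] by auto
  moreover have "(2::real)^k \<le> 2^(k + J)"
    by (intro power_increasing) auto
  ultimately have "T / (\<epsilon> / 2) \<le> 2^(k + J)"
    by linarith
  then have "T / 2^(k + J) \<le> \<epsilon> / 2"
    using assms by (simp add: field_simps)
  then have "P (k + J)"
    by (simp add: P_def)
  define j where "j = (LEAST j. P j)"
  have "P j"
    unfolding j_def by (rule LeastI) fact
  moreover have "\<epsilon> / 2^J \<le> T / 2^j"
  proof (cases "j = J")
    case True
    then show ?thesis
      using assms by (simp add: divide_right_mono)
  next
    case False
    then have "\<not> P (j - 1)"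
      using \<open>P j\<close> not_less_Least[of "j - 1" P] by (simp add: j_def P_def)
    moreover have "J \<le> j"
      using \<open>P j\<close> by (simp add: P_def)
    then have "J \<le> j - 1"
      using False by linarith
    ultimately have "\<epsilon> / 2 < T / 2^(j - 1)"
      by (simp add: P_def)
    have "(4::real) \<le> 2^J"
      using power_increasing[OF \<open>2 \<le> J\<close>, of "2::real"] by simp
    then have "\<epsilon> / 2^J \<le> \<epsilon> / 4"
      using assms by (intro divide_left_mono) auto
    also have "\<dots> = (\<epsilon> / 2) / 2"
      by simp
    also have "\<dots> < (T / 2^(j - 1)) / 2"
      using \<open>\<epsilon> / 2 < T / 2^(j - 1)\<close> by (rule divide_strict_right_mono) simp
    also have "\<dots> = T / 2^(Suc (j - 1))"
      by simp
    also have "\<dots> = T / 2^j"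
      using \<open>J \<le> j - 1\<close> \<open>2 \<le> J\<close> by (simp add: Suc_diff_le)
    finally show ?thesis
      by simp
  qed
  ultimately show ?thesis
    by (auto simp: P_def)
qed

definition grid_point :: "real \<Rightarrow> nat \<Rightarrow> nat \<Rightarrow> nat \<Rightarrow> nat \<Rightarrow> real" where
  "grid_point T N j r l = real r * (T / 2^j) + real l * (T / 2^j / real N)"

definition grid_increment :: "(real \<Rightarrow> 'i \<Rightarrow> real) \<Rightarrow> real \<Rightarrow> nat \<Rightarrow> nat \<Rightarrow> nat \<Rightarrow> nat \<Rightarrow> 'i \<Rightarrow> real" where
  "grid_increment Y T N j r l c = Y (grid_point T N j r (Suc l)) c - Y (grid_point T N j r l) c"

text \<open>The vectors \<open>z / 8^j\<close> form an \<open>8^(-j)\<close>-net of the directions of sup norm in \<open>[1/2, 1]\<close>.\<close>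

definition dyadic_net :: "'i set \<Rightarrow> nat \<Rightarrow> ('i \<Rightarrow> int) set" where
  "dyadic_net I j = {z \<in> I \<rightarrow>\<^sub>E {-(8^j)..8^j}. \<exists>c\<in>I. 8^j \<le> 2 * \<bar>z c\<bar>}"

definition small_grid_increments :: "'i set \<Rightarrow> real \<Rightarrow> nat \<Rightarrow> (real \<Rightarrow> 'i \<Rightarrow> real) \<Rightarrow> nat \<Rightarrow> bool" where
  "small_grid_increments I T N Y j \<longleftrightarrow>
     (\<forall>r<2^j. \<forall>c\<in>I. \<forall>l<N. \<bar>grid_increment Y T N j r l c\<bar> < 2^j)"

definition rough_on_grid :: "'i set \<Rightarrow> real \<Rightarrow> real \<Rightarrow> nat \<Rightarrow> (real \<Rightarrow> 'i \<Rightarrow> real) \<Rightarrow> nat \<Rightarrow> bool" where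
  "rough_on_grid I \<theta> T N Y j \<longleftrightarrow>
     (\<forall>r<2^j. \<forall>z\<in>dyadic_net I j. \<exists>l<N.
        4 * (T / 2^j) powr \<theta> \<le> \<bar>\<Sum>c\<in>I. real_of_int (z c) / 8^j * grid_increment Y T N j r l c\<bar>)"

lemma grid_point_in_block:
  assumes "0 \<le> T" and "0 < N" and "l \<le> N"
  shows "real r * (T / 2^j) \<le> grid_point T N j r l"
    and "grid_point T N j r l \<le> real r * (T / 2^j) + T / 2^j"
proof -
  have "real l * (T / 2^j / real N) \<le> real N * (T / 2^j / real N)"
    using assms by (intro mult_right_mono) auto
  then show "real r * (T / 2^j) \<le> grid_point T N j r l"
    and "grid_point T N j r l \<le> real r * (T / 2^j) + T / 2^j"
    using assms by (simp_all add: grid_point_def)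
qed

lemma dyadic_net_approximation:
  fixes \<psi> :: "'i \<Rightarrow> real"
  assumes c0: "c0 \<in> I" "\<bar>\<psi> c0\<bar> = 1" and \<psi>: "\<forall>c\<in>I. \<bar>\<psi> c\<bar> \<le> 1"
  shows "\<exists>z\<in>dyadic_net I j. \<forall>c\<in>I. \<bar>\<psi> c - real_of_int (z c) / 8^j\<bar> \<le> 1 / (2 * 8^j)"
proof -
  define z where "z c = (if c \<in> I then round (\<psi> c * 8^j) else undefined)" for c
  have err: "\<bar>real_of_int (z c) - \<psi> c * 8^j\<bar> \<le> 1/2" if "c \<in> I" for c
    using that of_int_round_abs_le[of "\<psi> c * 8^j"] by (simp add: z_def)
  have "z c \<in> {-(8^j)..8^j}" if "c \<in> I" for c
  proof -
    have "\<bar>\<psi> c * 8^j\<bar> \<le> 8^j"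
      using \<psi> that by (simp add: abs_mult)
    then have "\<bar>real_of_int (z c)\<bar> < 8^j + 1"
      using err[OF that] by linarith
    then have "real_of_int \<bar>z c\<bar> < real_of_int (8^j + 1)"
      by simp
    then show ?thesis
      unfolding of_int_less_iff atLeastAtMost_iff by linarith
  qed
  moreover have "8^j \<le> 2 * \<bar>z c0\<bar>"
  proof -
    have "\<bar>\<psi> c0 * 8^j\<bar> = 8^j"
      using c0 by (simp add: abs_mult)
    then have "8^j < 2 * \<bar>real_of_int (z c0)\<bar> + 1"
      using err[OF c0(1)] by linarith
    then have "real_of_int (8^j) < real_of_int (2 * \<bar>z c0\<bar> + 1)"
      by simp
    then show ?thesis
      unfolding of_int_less_iff by linarith
  qed
  ultimately have "z \<in> dyadic_net I j"
    using c0(1) by (auto simp: dyadic_net_def z_def abs_le_iff)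
  moreover have "\<bar>\<psi> c - real_of_int (z c) / 8^j\<bar> \<le> 1 / (2 * 8^j)" if "c \<in> I" for c
  proof -
    have "\<psi> c - real_of_int (z c) / 8^j = - ((real_of_int (z c) - \<psi> c * 8^j) / 8^j)"
      by (simp add: field_simps)
    moreover have "\<bar>real_of_int (z c) - \<psi> c * 8^j\<bar> / 8^j \<le> (1/2) / 8^j"
      using err[OF that] by (rule divide_right_mono) simp
    ultimately show ?thesis
      by (simp add: abs_div)
  qed
  ultimately show ?thesis
    by blast
qed

lemma grid_lower_bound:
  fixes \<psi> :: "'i \<Rightarrow> real"
  assumes small: "small_grid_increments I T N Y j" and rough: "rough_on_grid I \<theta> T N Y j"
    and card: "real (card I) * 2^j / 8^j \<le> (T / 2^j) powr \<theta>" and "r < 2^j"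
    and c0: "c0 \<in> I" "\<bar>\<psi> c0\<bar> = 1" and \<psi>: "\<forall>c\<in>I. \<bar>\<psi> c\<bar> \<le> 1"
  shows "\<exists>l<N. 2 * (T / 2^j) powr \<theta> \<le> \<bar>\<Sum>c\<in>I. \<psi> c * grid_increment Y T N j r l c\<bar>"
proof -
  define K where "K = (T / 2^j) powr \<theta>"
  obtain z where "z \<in> dyadic_net I j" and z: "\<forall>c\<in>I. \<bar>\<psi> c - real_of_int (z c) / 8^j\<bar> \<le> 1 / (2 * 8^j)"
    using dyadic_net_approximation[OF c0 \<psi>] by blast
  then obtain l where "l < N"
    and l: "4 * K \<le> \<bar>\<Sum>c\<in>I. real_of_int (z c) / 8^j * grid_increment Y T N j r l c\<bar>"
    using rough \<open>r < 2^j\<close> unfolding rough_on_grid_def K_def by blast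
  define D where "D c = grid_increment Y T N j r l c" for c
  \<comment> \<open>Replacing \<open>z / 8^j\<close> by \<open>\<psi>\<close> costs at most \<open>card I * 2^j / (2 * 8^j) \<le> K / 2\<close>.\<close>
  have "\<bar>\<Sum>c\<in>I. (\<psi> c - real_of_int (z c) / 8^j) * D c\<bar> \<le> (\<Sum>c\<in>I. 1 / (2 * 8^j) * 2^j)"
  proof (rule order_trans[OF sum_abs sum_mono])
    fix c assume "c \<in> I"
    then have "\<bar>D c\<bar> < 2^j"
      using small \<open>r < 2^j\<close> \<open>l < N\<close> by (simp add: small_grid_increments_def D_def)
    then show "\<bar>(\<psi> c - real_of_int (z c) / 8^j) * D c\<bar> \<le> 1 / (2 * 8^j) * 2^j"
      unfolding abs_mult using z \<open>c \<in> I\<close> by (intro mult_mono) auto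
  qed
  also have "\<dots> \<le> K / 2"
    using card by (simp add: K_def)
  finally have "\<bar>\<Sum>c\<in>I. (\<psi> c - real_of_int (z c) / 8^j) * D c\<bar> \<le> K / 2" .
  moreover have "(\<Sum>c\<in>I. \<psi> c * D c)
      = (\<Sum>c\<in>I. real_of_int (z c) / 8^j * D c) + (\<Sum>c\<in>I. (\<psi> c - real_of_int (z c) / 8^j) * D c)"
    by (simp add: sum.distrib[symmetric] algebra_simps)
  moreover have "0 \<le> K"
    by (simp add: K_def)
  ultimately have "2 * K \<le> \<bar>\<Sum>c\<in>I. \<psi> c * D c\<bar>"
    using l unfolding D_def by linarith
  then show ?thesis
    using \<open>l < N\<close> by (auto simp: K_def D_def)
qed

lemma rough_time_of_grid_estimates:
  fixes \<psi> :: "'i \<Rightarrow> real"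
  assumes T: "0 < T" and "0 < \<theta>" and N: "0 < N" and "2 \<le> J"
    and grid: "\<And>j. J \<le> j \<Longrightarrow> small_grid_increments I T N Y j \<and> rough_on_grid I \<theta> T N Y j
                    \<and> real (card I) * 2^j / 8^j \<le> (T / 2^j) powr \<theta>"
    and \<psi>: "c0 \<in> I" "\<bar>\<psi> c0\<bar> = 1" "\<forall>c\<in>I. \<bar>\<psi> c\<bar> \<le> 1"
    and s: "s \<in> {0..T}" and \<epsilon>: "0 < \<epsilon>" "\<epsilon> \<le> T"
  shows "\<exists>t\<in>{0..T}. \<bar>t - s\<bar> \<le> \<epsilon> \<and> (\<epsilon> / 2^J) powr \<theta> \<le> \<bar>\<Sum>c\<in>I. \<psi> c * (Y t c - Y s c)\<bar>"
proof -
  obtain j where "J \<le> j" and scale: "\<epsilon> / 2^J \<le> T / 2^j" "T / 2^j \<le> \<epsilon> / 2"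
    using exists_dyadic_scale[OF \<open>2 \<le> J\<close> \<epsilon>] by blast
  obtain r where "r < 2^j" and block: "s - \<epsilon> \<le> real r * (T / 2^j)"
    "real r * (T / 2^j) + T / 2^j \<le> min (s + \<epsilon>) T"
    using exists_dyadic_block[OF T scale(2)] s by auto
  define K where "K = (T / 2^j) powr \<theta>"
  obtain l where "l < N" and l: "2 * K \<le> \<bar>\<Sum>c\<in>I. \<psi> c * grid_increment Y T N j r l c\<bar>"
    using grid_lower_bound[OF _ _ _ \<open>r < 2^j\<close> \<psi>] grid[OF \<open>J \<le> j\<close>] unfolding K_def by blast
  define t0 t1 where "t0 = grid_point T N j r l" and "t1 = grid_point T N j r (Suc l)"
  have close: "t \<in> {0..T} \<and> \<bar>t - s\<bar> \<le> \<epsilon>" if "t = t0 \<or> t = t1" for t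
  proof -
    have "real r * (T / 2^j) \<le> t" "t \<le> real r * (T / 2^j) + T / 2^j"
      using that grid_point_in_block[of T N] T N \<open>l < N\<close> by (auto simp: t0_def t1_def)
    moreover have "0 \<le> real r * (T / 2^j)"
      using T by simp
    ultimately show ?thesis
      using block s unfolding atLeastAtMost_iff abs_le_iff min.bounded_iff by linarith
  qed
  have "(\<Sum>c\<in>I. \<psi> c * grid_increment Y T N j r l c)
      = (\<Sum>c\<in>I. \<psi> c * (Y t1 c - Y s c)) - (\<Sum>c\<in>I. \<psi> c * (Y t0 c - Y s c))"
    by (simp add: grid_increment_def t0_def t1_def sum_subtractf[symmetric] algebra_simps)
  then have "K \<le> \<bar>\<Sum>c\<in>I. \<psi> c * (Y t1 c - Y s c)\<bar> \<or> K \<le> \<bar>\<Sum>c\<in>I. \<psi> c * (Y t0 c - Y s c)\<bar>"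
    using l by linarith
  moreover have "(\<epsilon> / 2^J) powr \<theta> \<le> K"
    unfolding K_def using scale \<epsilon> \<open>0 < \<theta>\<close> by (intro powr_mono2) auto
  ultimately show ?thesis
    using close by fastforce
qed

lemma sqrt_sum_squares_le:
  fixes \<phi> :: "'i \<Rightarrow> real"
  assumes "\<And>c. c \<in> I \<Longrightarrow> \<bar>\<phi> c\<bar> \<le> \<mu>" and "0 \<le> \<mu>"
  shows "sqrt (\<Sum>c\<in>I. (\<phi> c)\<^sup>2) \<le> sqrt (real (card I)) * \<mu>"
proof -
  have "(\<Sum>c\<in>I. (\<phi> c)\<^sup>2) \<le> (\<Sum>c\<in>I. \<mu>\<^sup>2)"
    using assms by (intro sum_mono) (metis abs_ge_zero power2_abs power_mono)
  then have "sqrt (\<Sum>c\<in>I. (\<phi> c)\<^sup>2) \<le> sqrt (real (card I) * \<mu>\<^sup>2)"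
    by simp
  also have "\<dots> = sqrt (real (card I)) * \<mu>"
    using assms(2) by (simp add: real_sqrt_mult)
  finally show ?thesis .
qed

lemma holder_rough_of_grid_estimates:
  fixes I :: "'i set" and Y :: "real \<Rightarrow> 'i \<Rightarrow> real"
  assumes I: "finite I" "I \<noteq> {}" and "0 < T" "0 < \<theta>" "0 < N" "2 \<le> J"
    and grid: "\<And>j. J \<le> j \<Longrightarrow> small_grid_increments I T N Y j \<and> rough_on_grid I \<theta> T N Y j
                    \<and> real (card I) * 2^j / 8^j \<le> (T / 2^j) powr \<theta>"
  shows "holder_rough I \<theta> (T / 2) T Y"
  unfolding holder_rough_def
proof (intro exI conjI allI ballI impI)
  define L where "L = (1 / 2^J) powr \<theta> / sqrt (real (card I))"
  show "0 < L"
    using I by (simp add: L_def card_gt_0_iff)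
  fix \<phi> :: "'i \<Rightarrow> real" and s \<epsilon> :: real
  assume s: "s \<in> {0..T}" and \<epsilon>: "0 < \<epsilon> \<and> \<epsilon> < T / 2"
  define \<mu> where "\<mu> = Max ((\<lambda>c. \<bar>\<phi> c\<bar>) ` I)"
  have "\<mu> \<in> (\<lambda>c. \<bar>\<phi> c\<bar>) ` I"
    unfolding \<mu>_def using I by (intro Max_in) auto
  then obtain c0 where "c0 \<in> I" "\<bar>\<phi> c0\<bar> = \<mu>"
    by auto
  have \<phi>_le: "\<bar>\<phi> c\<bar> \<le> \<mu>" if "c \<in> I" for c
    using I that unfolding \<mu>_def by (intro Max_ge) auto
  have norm_le: "sqrt (\<Sum>c\<in>I. (\<phi> c)\<^sup>2) \<le> sqrt (real (card I)) * \<mu>"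
    using \<phi>_le \<open>\<bar>\<phi> c0\<bar> = \<mu>\<close> by (intro sqrt_sum_squares_le) auto
  show "\<exists>t\<in>{0..T}. \<bar>t - s\<bar> \<le> \<epsilon> \<and> L * \<epsilon> powr \<theta> * sqrt (\<Sum>c\<in>I. (\<phi> c)\<^sup>2) \<le> \<bar>\<Sum>c\<in>I. \<phi> c * (Y t c - Y s c)\<bar>"
  proof (cases "\<mu> = 0")
    case True
    have "0 \<le> sqrt (\<Sum>c\<in>I. (\<phi> c)\<^sup>2)"
      by (simp add: sum_nonneg)
    moreover have "sqrt (\<Sum>c\<in>I. (\<phi> c)\<^sup>2) \<le> 0"
      using norm_le by (simp add: True)
    ultimately have "sqrt (\<Sum>c\<in>I. (\<phi> c)\<^sup>2) = 0"
      by linarith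
    then show ?thesis
      using s \<epsilon> by (intro bexI[of _ s]) simp_all
  next
    case False
    then have "0 < \<mu>"
      using \<open>\<bar>\<phi> c0\<bar> = \<mu>\<close> by auto
    define \<psi> where "\<psi> c = \<phi> c / \<mu>" for c
    have "\<bar>\<psi> c0\<bar> = 1" "\<forall>c\<in>I. \<bar>\<psi> c\<bar> \<le> 1"
      using \<open>\<bar>\<phi> c0\<bar> = \<mu>\<close> \<phi>_le \<open>0 < \<mu>\<close> by (auto simp: \<psi>_def abs_div)
    moreover have "0 < \<epsilon>" "\<epsilon> \<le> T"
      using \<epsilon> by auto
    ultimately obtain t where t: "t \<in> {0..T}" "\<bar>t - s\<bar> \<le> \<epsilon>"
      and rough: "(\<epsilon> / 2^J) powr \<theta> \<le> \<bar>\<Sum>c\<in>I. \<psi> c * (Y t c - Y s c)\<bar>"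
      using rough_time_of_grid_estimates[OF assms(3-6) grid \<open>c0 \<in> I\<close> _ _ s] by blast
    have "L * \<epsilon> powr \<theta> * sqrt (\<Sum>c\<in>I. (\<phi> c)\<^sup>2) \<le> L * \<epsilon> powr \<theta> * (sqrt (real (card I)) * \<mu>)"
      using norm_le \<open>0 < L\<close> by (intro mult_left_mono) auto
    also have "\<dots> = (1 / 2^J) powr \<theta> * \<epsilon> powr \<theta> * \<mu>"
      using I by (simp add: L_def card_gt_0_iff)
    also have "\<dots> = (\<epsilon> / 2^J) powr \<theta> * \<mu>"
      using \<open>0 < \<epsilon>\<close> by (simp add: powr_mult[symmetric])
    also have "\<dots> \<le> \<bar>\<Sum>c\<in>I. \<psi> c * (Y t c - Y s c)\<bar> * \<mu>"
      using rough \<open>0 < \<mu>\<close> by (intro mult_right_mono) auto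
    also have "\<dots> = \<bar>\<mu> * (\<Sum>c\<in>I. \<psi> c * (Y t c - Y s c))\<bar>"
      using \<open>0 < \<mu>\<close> by (simp add: abs_mult)
    also have "\<mu> * (\<Sum>c\<in>I. \<psi> c * (Y t c - Y s c)) = (\<Sum>c\<in>I. \<phi> c * (Y t c - Y s c))"
      using \<open>0 < \<mu>\<close> by (simp add: \<psi>_def sum_distrib_left)
    finally show ?thesis
      using t by blast
  qed
qed

lemma holder_rough_empty: "holder_rough {} \<theta> \<epsilon>0 T Y"
  unfolding holder_rough_def by (intro exI[of _ 1]) force

section \<open>The grid estimates hold almost surely at all fine scales\<close>

lemma small_ball_factor_eq:
  fixes T q \<theta> :: real and N :: nat
  assumes "0 < T" and "0 < q" and "0 < N"
  shows "8 * (T * q) powr \<theta> / sqrt (T * q / real N) = 8 * sqrt N * T powr (\<theta> - 1/2) * q powr (\<theta> - 1/2)"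
proof -
  have "sqrt (T * q / real N) = (T * q) powr (1/2) / sqrt N"
    using assms by (simp add: powr_half_sqrt real_sqrt_divide)
  moreover have "(T * q) powr \<theta> / (T * q) powr (1/2) = T powr (\<theta> - 1/2) * q powr (\<theta> - 1/2)"
    using assms by (simp add: powr_diff powr_mult)
  ultimately show ?thesis
    using assms by (simp add: field_simps)
qed

lemma small_ball_union_bound_decay:
  fixes T \<theta> :: real and N d j :: nat
  assumes T: "0 < T" and N: "0 < N" and Nd: "3 * real d + 3 \<le> real N * (\<theta> - 1/2)"
  shows "2^j * (2 * 8^j + 1)^d * (8 * (T / 2^j) powr \<theta> / sqrt (T / 2^j / real N))^N
         \<le> 3^d * (8 * sqrt N * T powr (\<theta> - 1/2))^N * (1/2)^j"
proof -
  define q :: real where "q = 1 / 2^j"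
  define A where "A = 8 * sqrt N * T powr (\<theta> - 1/2)"
  have q: "0 < q" "q \<le> 1"
    by (simp_all add: q_def)
  have "(q powr (\<theta> - 1/2))^N = q powr (real N * (\<theta> - 1/2))"
    using q by (simp add: powr_power mult.commute)
  also have "\<dots> \<le> q powr (real (3 * d + 3))"
    using Nd q by (intro powr_mono') auto
  also have "\<dots> = q^(3 * d + 3)"
    by (rule powr_realpow[OF q(1)])
  finally have "(8 * (T * q) powr \<theta> / sqrt (T * q / real N))^N \<le> A^N * q^(3 * d + 3)"
    using small_ball_factor_eq[OF T q(1) N, of \<theta>]
    by (simp add: A_def power_mult_distrib mult_left_mono)
  moreover have "(2 * 8^j + 1 :: real)^d \<le> (3 * 8^j)^d"
    by (intro power_mono) auto
  ultimately have "2^j * (2 * 8^j + 1)^d * (8 * (T * q) powr \<theta> / sqrt (T * q / real N))^N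
      \<le> 2^j * (3 * 8^j)^d * (A^N * q^(3 * d + 3))"
    using T q N by (intro mult_mono) auto
  also have "\<dots> = 3^d * A^N * q^2"
  proof -
    define p :: real where "p = 2^j"
    have "(8::real)^(j * d) = (2^3)^(j * d)"
      by simp
    also have "\<dots> = p^(3 * d)"
      unfolding p_def power_mult[symmetric] by (simp add: algebra_simps)
    finally have "(2::real)^j * 8^(j * d) * q^(3 * d + 3) = p * p^(3 * d) * (1 / p)^(3 * d + 3)"
      by (simp add: p_def q_def)
    also have "\<dots> = q^2"
      by (simp add: p_def q_def power_add power_one_over field_simps power2_eq_square power3_eq_cube)
    finally have "(2::real)^j * 8^(j * d) * q^(3 * d + 3) = q^2" .
    then show ?thesis
      by (simp add: power_mult_distrib power_mult[symmetric] algebra_simps)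
  qed
  also have "\<dots> \<le> 3^d * A^N * q"
    using q by (intro mult_left_mono) (auto simp: A_def power2_eq_square mult_le_cancel_right1)
  finally show ?thesis
    by (simp add: q_def A_def power_one_over)
qed

lemma exists_uniform_gap:
  fixes g :: "nat \<Rightarrow> real"
  assumes "\<forall>i. Suc i < n \<longrightarrow> g i < g (Suc i)"
  shows "\<exists>\<gamma>>0. \<forall>i. Suc i < n \<longrightarrow> g i + \<gamma> \<le> g (Suc i)"
proof -
  define G where "G = insert 1 ((\<lambda>i. g (Suc i) - g i) ` {i. Suc i < n})"
  have "finite {i. Suc i < n}"
    by (rule finite_subset[of _ "{..<n}"]) auto
  then have G: "finite G" "G \<noteq> {}"
    by (simp_all add: G_def)
  have "0 < Min G"
    using assms G by (subst Min_gr_iff) (auto simp: G_def)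
  moreover have "g i + Min G \<le> g (Suc i)" if "Suc i < n" for i
  proof -
    have "Min G \<le> g (Suc i) - g i"
      using G(1) that by (intro Min_le) (auto simp: G_def)
    then show ?thesis
      by simp
  qed
  ultimately show ?thesis
    by blast
qed

lemma eventually_dyadic_below_gaps:
  fixes g :: "nat \<Rightarrow> real" and T :: real
  assumes "\<forall>i. Suc i < n \<longrightarrow> g i < g (Suc i)"
  shows "\<exists>j0. \<forall>j\<ge>j0. \<forall>i. Suc i < n \<longrightarrow> g i + T / 2^j < g (Suc i)"
proof -
  obtain \<gamma> where "0 < \<gamma>" and \<gamma>: "\<forall>i. Suc i < n \<longrightarrow> g i + \<gamma> \<le> g (Suc i)"
    using exists_uniform_gap[OF assms] by blast
  obtain j0 :: nat where "T / \<gamma> < 2^j0"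
    using real_arch_pow[of 2 "T / \<gamma>"] by auto
  have "T / 2^j < \<gamma>" if "j0 \<le> j" for j
  proof -
    have "(2::real)^j0 \<le> 2^j"
      using that by (intro power_increasing) auto
    then have "T / \<gamma> < 2^j"
      using \<open>T / \<gamma> < 2^j0\<close> by linarith
    then show "T / 2^j < \<gamma>"
      using \<open>0 < \<gamma>\<close> by (simp add: divide_less_eq mult.commute)
  qed
  then show ?thesis
    using \<gamma> by fastforce
qed

lemma sets_Collect_all_abs_less:
  fixes f :: "nat \<Rightarrow> 'a \<Rightarrow> real"
  assumes "\<And>l. l < N \<Longrightarrow> f l \<in> borel_measurable M"
  shows "{\<omega>\<in>space M. \<forall>l<N. \<bar>f l \<omega>\<bar> < x} \<in> sets M"
proof -
  have "{\<omega>\<in>space M. \<forall>l\<in>{..<N}. \<bar>f l \<omega>\<bar> < x} \<in> sets M"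
  proof (rule sets.sets_Collect_finite_All)
    fix l assume "l \<in> {..<N}"
    then have [measurable]: "f l \<in> borel_measurable M"
      using assms by auto
    show "{\<omega>\<in>space M. \<bar>f l \<omega>\<bar> < x} \<in> sets M"
      by measurable
  qed simp
  moreover have "{\<omega>\<in>space M. \<forall>l<N. \<bar>f l \<omega>\<bar> < x} = {\<omega>\<in>space M. \<forall>l\<in>{..<N}. \<bar>f l \<omega>\<bar> < x}"
    by auto
  ultimately show ?thesis
    by simp
qed

lemma grid_point_step: "grid_point T N j r (Suc l) - grid_point T N j r l = T / 2^j / real N"
  unfolding grid_point_def of_nat_Suc distrib_right by simp

lemma grid_increment_delayed:
  "grid_increment (\<lambda>t (k, i). W k (t - g i) \<omega>) T N j r l c
     = delayed_increment W g (grid_point T N j r l) (grid_point T N j r (Suc l)) c \<omega>"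
  by (cases c) (simp add: grid_increment_def delayed_increment_def)

lemma finite_dyadic_net: "finite I \<Longrightarrow> finite (dyadic_net I j)"
  by (rule finite_subset[of _ "I \<rightarrow>\<^sub>E {-(8^j)..8^j}"]) (auto simp: dyadic_net_def intro: finite_PiE)

lemma card_dyadic_net_le:
  assumes "finite I"
  shows "real (card (dyadic_net I j)) \<le> (2 * 8^j + 1) ^ card I"
proof -
  have "card (dyadic_net I j) \<le> card (I \<rightarrow>\<^sub>E {-(8^j)..(8::int)^j})"
    using assms by (intro card_mono) (auto simp: dyadic_net_def intro: finite_PiE)
  also have "\<dots> = nat (2 * 8^j + 1) ^ card I"
    using assms by (simp add: card_PiE)
  finally have "real (card (dyadic_net I j)) \<le> real (nat (2 * 8^j + 1) ^ card I)"
    by linarith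
  also have "\<dots> = (2 * 8^j + 1) ^ card I"
    by (simp add: of_nat_power)
  finally show ?thesis .
qed

lemma two_sided_bm_not_small_grid_increments:
  fixes g :: "nat \<Rightarrow> real" and n j :: nat
  assumes bm: "two_sided_bm M m W" and T: "0 < T" and N: "0 < N"
  defines "B \<equiv> {\<omega>\<in>space M. \<not> small_grid_increments ({..<m} \<times> {..<n}) T N (\<lambda>t (k, i). W k (t - g i) \<omega>) j}"
  shows "B \<in> sets M" and "measure M B \<le> real (m * n) * T * (1/4)^j"
proof -
  define I where "I = {..<m} \<times> {..<n}"
  define P where "P = {..<(2::nat)^j} \<times> I \<times> {..<N}"
  define X where "X r c l = delayed_increment W g (grid_point T N j r l) (grid_point T N j r (Suc l)) c" for r c l
  define E where "E = (\<lambda>(r, c, l). {\<omega>\<in>space M. 2^j \<le> \<bar>X r c l \<omega>\<bar>})"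
  have finite_P: "finite P"
    by (simp add: P_def I_def)
  have B_eq: "B = (\<Union>p\<in>P. E p)"
    by (auto simp: B_def E_def P_def I_def X_def small_grid_increments_def grid_increment_delayed not_less)
  have "0 < T / 2^j / real N"
    using T N by simp
  then have step: "grid_point T N j r l < grid_point T N j r (Suc l)" for r l
    using grid_point_step[of T N j r l] by linarith
  have E_sets: "E p \<in> sets M" if "p \<in> P" for p
  proof -
    obtain r c l where p: "p = (r, c, l)" and "c \<in> I"
      using \<open>p \<in> P\<close> by (auto simp: P_def)
    then have [measurable]: "X r c l \<in> borel_measurable M"
      unfolding X_def I_def by (intro two_sided_bm_delayed_increment_measurable[OF bm _ step])
    show ?thesis
      unfolding p E_def prod.case by measurable
  qed
  then show "B \<in> sets M"
    unfolding B_eq using finite_P by (intro sets.finite_UN) auto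
  have "measure M B \<le> (\<Sum>p\<in>P. measure M (E p))"
    unfolding B_eq using E_sets finite_P by (intro measure_UNION_le) auto
  also have "\<dots> \<le> (\<Sum>p\<in>P. (T / 2^j / real N) / (2^j)\<^sup>2)"
  proof (rule sum_mono)
    fix p assume "p \<in> P"
    then obtain r k i l where p: "p = (r, (k, i), l)" and "k < m"
      by (auto simp: P_def I_def)
    show "measure M (E p) \<le> (T / 2^j / real N) / (2^j)\<^sup>2"
      using two_sided_bm_prob_increment_ge[OF bm \<open>k < m\<close>, of "grid_point T N j r l - g i"
          "grid_point T N j r (Suc l) - g i" "2^j"] step[of r l] grid_point_step[of T N j r l]
      by (simp add: p E_def X_def delayed_increment_def)
  qed
  also have "\<dots> = real (m * n) * T * (1/4)^j"
  proof -
    have "((2::real)^j)\<^sup>2 = 4^j"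
      by (simp add: power2_eq_square flip: power_mult_distrib)
    then show ?thesis
      using N by (simp add: P_def I_def card_cartesian_product power_one_over field_simps)
  qed
  finally show "measure M B \<le> real (m * n) * T * (1/4)^j" .
qed

lemma two_sided_bm_not_rough_on_grid:
  fixes g :: "nat \<Rightarrow> real" and n j :: nat and \<theta> :: real
  assumes bm: "two_sided_bm M m W" and T: "0 < T" and N: "0 < N"
  defines "B \<equiv> {\<omega>\<in>space M. \<not> rough_on_grid ({..<m} \<times> {..<n}) \<theta> T N (\<lambda>t (k, i). W k (t - g i) \<omega>) j}"
  shows "B \<in> sets M"
    and "0 < n \<Longrightarrow> \<forall>i. Suc i < n \<longrightarrow> g i + T / 2^j < g (Suc i) \<Longrightarrow>
           measure M B \<le> 2^j * (2 * 8^j + 1)^(m * n) * (8 * (T / 2^j) powr \<theta> / sqrt (T / 2^j / real N))^N"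
proof -
  define I where "I = {..<m} \<times> {..<n}"
  define P where "P = {..<(2::nat)^j} \<times> dyadic_net I j"
  define h where "h = T / 2^j / real N"
  define K where "K = 4 * (T / 2^j) powr \<theta>"
  define X where "X r c l = delayed_increment W g (real r * (T / 2^j) + real l * h)
      (real r * (T / 2^j) + real (Suc l) * h) c" for r c l
  define E where "E = (\<lambda>(r, z). {\<omega>\<in>space M. \<forall>l<N. \<bar>\<Sum>c\<in>I. real_of_int (z c) / 8^j * X r c l \<omega>\<bar> < K})"
  have finite_P: "finite P"
    by (simp add: P_def I_def finite_dyadic_net)
  have B_eq: "B = (\<Union>p\<in>P. E p)"
    by (auto simp: B_def E_def P_def I_def X_def K_def h_def rough_on_grid_def grid_increment_delayed
        grid_point_def not_le)
  have h: "0 < h"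
    using T N by (simp add: h_def)
  have E_sets: "E p \<in> sets M" for p
  proof -
    have "X r c l \<in> borel_measurable M" if "c \<in> I" for r c l
      using h that unfolding X_def I_def by (intro two_sided_bm_delayed_increment_measurable[OF bm]) auto
    then show ?thesis
      unfolding E_def by (cases p) (auto intro!: sets_Collect_all_abs_less borel_measurable_sum)
  qed
  then show "B \<in> sets M"
    unfolding B_eq using finite_P by (intro sets.finite_UN) auto
  assume "0 < n" and gap: "\<forall>i. Suc i < n \<longrightarrow> g i + T / 2^j < g (Suc i)"
  have gap': "\<forall>i. Suc i < n \<longrightarrow> g i + real N * h < g (Suc i)"
    using gap N by (simp add: h_def)
  have "measure M B \<le> (\<Sum>p\<in>P. measure M (E p))"
    unfolding B_eq using E_sets finite_P by (intro measure_UNION_le) auto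
  also have "\<dots> \<le> (\<Sum>p\<in>P. (2 * K / sqrt h)^N)"
  proof (rule sum_mono)
    fix p assume "p \<in> P"
    then obtain r z c0 where p: "p = (r, z)" and "c0 \<in> I" and "8^j \<le> 2 * \<bar>z c0\<bar>"
      by (auto simp: P_def dyadic_net_def)
    then have "real_of_int (8^j) \<le> real_of_int (2 * \<bar>z c0\<bar>)"
      by (simp only: of_int_le_iff)
    then have "1/2 \<le> \<bar>real_of_int (z c0) / 8^j\<bar>"
      by (simp add: abs_div field_simps)
    moreover have "0 < K"
      using T by (simp add: K_def)
    ultimately have "measure M (E p) \<le> (2 * K / sqrt h)^N"
      using two_sided_bm_small_ball[where a = "real r * (T / 2^j)" and \<phi> = "\<lambda>c. real_of_int (z c) / 8^j",
          OF bm h \<open>0 < n\<close> gap'] \<open>c0 \<in> I\<close>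
      unfolding p E_def X_def I_def by simp
    then show "measure M (E p) \<le> (2 * K / sqrt h)^N" .
  qed
  also have "\<dots> = real (card P) * (8 * (T / 2^j) powr \<theta> / sqrt h)^N"
    by (simp add: K_def)
  also have "\<dots> \<le> 2^j * (2 * 8^j + 1)^(m * n) * (8 * (T / 2^j) powr \<theta> / sqrt h)^N"
  proof (rule mult_right_mono)
    show "real (card P) \<le> 2^j * (2 * 8^j + 1)^(m * n)"
      using card_dyadic_net_le[of I j] by (simp add: P_def I_def card_cartesian_product)
  qed (use h in simp)
  finally show "measure M B \<le> 2^j * (2 * 8^j + 1)^(m * n) * (8 * (T / 2^j) powr \<theta> / sqrt (T / 2^j / real N))^N"
    by (simp add: h_def)
qed

lemma two_sided_bm_AE_eventually_grid_estimates:
  fixes g :: "nat \<Rightarrow> real"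
  assumes bm: "two_sided_bm M m W" and T: "0 < T" and n: "0 < n"
    and g: "\<forall>i. Suc i < n \<longrightarrow> g i < g (Suc i)"
    and N: "0 < N" and Nd: "3 * real (m * n) + 3 \<le> real N * (\<theta> - 1/2)"
  shows "AE \<omega> in M. \<exists>J. \<forall>j\<ge>J.
           small_grid_increments ({..<m} \<times> {..<n}) T N (\<lambda>t (k, i). W k (t - g i) \<omega>) j \<and>
           rough_on_grid ({..<m} \<times> {..<n}) \<theta> T N (\<lambda>t (k, i). W k (t - g i) \<omega>) j"
    (is "AE \<omega> in M. \<exists>J. \<forall>j\<ge>J. ?good j \<omega>")
proof -
  interpret prob_space M
    using bm by (rule two_sided_bm_prob_space)
  obtain j0 where gap: "\<And>j. j0 \<le> j \<Longrightarrow> \<forall>i. Suc i < n \<longrightarrow> g i + T / 2^j < g (Suc i)"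
    using eventually_dyadic_below_gaps[OF g] by blast
  define A where "A = 3^(m * n) * (8 * sqrt N * T powr (\<theta> - 1/2))^N"
  define B1 where "B1 j = {\<omega>\<in>space M. \<not> small_grid_increments ({..<m} \<times> {..<n}) T N (\<lambda>t (k, i). W k (t - g i) \<omega>) j}" for j
  define B2 where "B2 j = {\<omega>\<in>space M. \<not> rough_on_grid ({..<m} \<times> {..<n}) \<theta> T N (\<lambda>t (k, i). W k (t - g i) \<omega>) j}" for j
  have bad_eq: "{\<omega>\<in>space M. \<not> ?good j \<omega>} = B1 j \<union> B2 j" for j
    by (auto simp: B1_def B2_def)
  show ?thesis
  proof (rule AE_eventually_of_geometric_bound)
    fix j
    show "{\<omega>\<in>space M. \<not> ?good j \<omega>} \<in> events"
      unfolding bad_eq B1_def B2_def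
      using two_sided_bm_not_small_grid_increments(1)[OF bm T N] two_sided_bm_not_rough_on_grid(1)[OF bm T N]
      by blast
    assume "j0 \<le> j"
    have "prob {\<omega>\<in>space M. \<not> ?good j \<omega>} \<le> prob (B1 j) + prob (B2 j)"
      unfolding bad_eq B1_def B2_def
      using two_sided_bm_not_small_grid_increments(1)[OF bm T N] two_sided_bm_not_rough_on_grid(1)[OF bm T N]
      by (intro measure_Un_le) auto
    also have "\<dots> \<le> real (m * n) * T * (1/4)^j + A * (1/2)^j"
      using two_sided_bm_not_small_grid_increments(2)[OF bm T N, of n g j]
        two_sided_bm_not_rough_on_grid(2)[OF bm T N n gap[OF \<open>j0 \<le> j\<close>], of \<theta>]
        small_ball_union_bound_decay[OF T N Nd, of j]
      unfolding B1_def B2_def A_def by linarith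
    also have "\<dots> \<le> (real (m * n) * T + A) * (1/2)^j"
    proof -
      have "(1/4::real)^j \<le> (1/2)^j"
        by (intro power_mono) auto
      then show ?thesis
        using T by (simp add: distrib_right mult_left_mono)
    qed
    finally show "prob {\<omega>\<in>space M. \<not> ?good j \<omega>} \<le> (real (m * n) * T + A) * (1/2)^j" .
  qed
qed

lemma eventually_card_scale_bound:
  fixes T \<theta> :: real and d :: nat
  assumes T: "0 < T" and \<theta>: "\<theta> \<le> 1"
  shows "\<exists>J. \<forall>j\<ge>J. real d * 2^j / 8^j \<le> (T / 2^j) powr \<theta>"
proof -
  obtain J :: nat where J: "real d / T powr \<theta> < 2^J"
    using real_arch_pow[of 2 "real d / T powr \<theta>"] by auto
  have "real d * 2^j / 8^j \<le> (T / 2^j) powr \<theta>" if "J \<le> j" for j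
  proof -
    have "(2::real)^J \<le> 2^j"
      using that by (intro power_increasing) auto
    then have "real d / T powr \<theta> < 2^j"
      using J by linarith
    then have "real d / 2^j \<le> T powr \<theta>"
      using T by (simp add: divide_less_eq divide_le_eq mult.commute)
    have "real d * 2^j / 8^j = (real d / 2^j) / 2^j"
      by (simp add: field_simps flip: power_mult_distrib)
    also have "\<dots> \<le> T powr \<theta> / 2^j"
      using \<open>real d / 2^j \<le> T powr \<theta>\<close> by (rule divide_right_mono) simp
    also have "\<dots> \<le> T powr \<theta> / (2^j) powr \<theta>"
    proof -
      have "((2::real)^j) powr \<theta> \<le> ((2::real)^j) powr 1"
        using \<theta> by (intro powr_mono) auto
      then show ?thesis
        using T by (intro divide_left_mono) auto
    qed
    also have "\<dots> = (T / 2^j) powr \<theta>"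
      using T by (simp add: powr_divide)
    finally show ?thesis .
  qed
  then show ?thesis
    by blast
qed

lemma exists_nat_mult_ge:
  fixes c x :: real
  assumes "0 < c"
  shows "\<exists>N>0. x \<le> real N * c"
proof -
  obtain N :: nat where "max x 0 / c < real N"
    using reals_Archimedean2 by blast
  then show ?thesis
    using assms by (intro exI[of _ N]) (auto simp: divide_less_eq intro!: gr0I)
qed

theorem lemma2p4:
  fixes M :: "'a measure" and W :: "nat \<Rightarrow> real \<Rightarrow> 'a \<Rightarrow> real"
    and m n :: nat and g :: "nat \<Rightarrow> real" and T \<alpha> \<theta> :: real
  assumes "two_sided_bm M m W"
    and "T > 0" and "1/3 < \<alpha>" and "\<alpha> < 1/2"
    and "0 < n" and "g 0 = 0" and "\<forall>i. Suc i < n \<longrightarrow> g i < g (Suc i)"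
    and "1/2 < \<theta>" and "\<theta> < 2 * \<alpha>"
  shows "AE \<omega> in M. holder_rough ({..<m} \<times> {..<n}) \<theta> (T / 2) T
                        (\<lambda>t (k, i). W k (t - g i) \<omega>)"
proof (cases "m = 0")
  case True
  then show ?thesis
    by (simp add: holder_rough_empty)
next
  case False
  obtain N :: nat where "0 < N" and Nd: "3 * real (m * n) + 3 \<le> real N * (\<theta> - 1/2)"
    using exists_nat_mult_ge[of "\<theta> - 1/2"] assms(8) by auto
  obtain J0 where J0: "\<forall>j\<ge>J0. real (m * n) * 2^j / 8^j \<le> (T / 2^j) powr \<theta>"
    using eventually_card_scale_bound[of T \<theta> "m * n"] assms by auto
  have "AE \<omega> in M. \<exists>J. \<forall>j\<ge>J.
          small_grid_increments ({..<m} \<times> {..<n}) T N (\<lambda>t (k, i). W k (t - g i) \<omega>) j \<and>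
          rough_on_grid ({..<m} \<times> {..<n}) \<theta> T N (\<lambda>t (k, i). W k (t - g i) \<omega>) j"
    using assms(1,2,5,7) \<open>0 < N\<close> Nd by (rule two_sided_bm_AE_eventually_grid_estimates)
  then show ?thesis
  proof (rule eventually_mono, elim exE)
    fix \<omega> J
    assume "\<forall>j\<ge>J. small_grid_increments ({..<m} \<times> {..<n}) T N (\<lambda>t (k, i). W k (t - g i) \<omega>) j \<and>
                  rough_on_grid ({..<m} \<times> {..<n}) \<theta> T N (\<lambda>t (k, i). W k (t - g i) \<omega>) j"
    then show "holder_rough ({..<m} \<times> {..<n}) \<theta> (T / 2) T (\<lambda>t (k, i). W k (t - g i) \<omega>)"
      using J0 False assms(2,5,8) \<open>0 < N\<close>
      by (intro holder_rough_of_grid_estimates[where J = "max 2 (max J J0)" and N = N]) (auto simp: card_cartesian_product)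
  qed
qed

end
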